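(* Let $\Gamma$ be a symmetric bimatrix game. In a fully symmetric indirect correlated equilibrium of $\Gamma$ in which each player knows the state of the world, the distribution of the players' actions conditioned on the state is almost surely a symmetric Nash equilibrium of $\Gamma$; moreover, every symmetric Nash equilibrium of $\Gamma$ arises in this way.
   Context: A symmetric bimatrix game: two players with common finite strategy set $C_1$ and utilities with $u_1(s_1,s_2)=u_2(s_2,s_1)$. A correlation scheme consists of a random state of the world, independent private noise signals for each player (independent of the state), for each player a map from (state, own noise) to that player's information, and for each player $i$ a function $f_i$ from his information to his action in $C_1$; all these data are known to the players, only realizations are hidden. It is an indirect correlated equilibrium if no player can increase his expected utility by unilaterally replacing $f_i$ by another function of his information. A correlation scheme is fully symmetric if all players have the same noise distribution, the same map from state and noise to information, and the same map $f_i$ from information to action. A player knows the state of the world if the state is a (measurable) function of his information. A symmetric Nash equilibrium is a mixed strategy profile $(x,x)$ in which each player's mixed strategy is a best response to the other's. *)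

theory Defs
  imports "HOL-Probability.Probability"
begin

text \<open>A symmetric bimatrix game is given by a finite strategy type 'c and a utility
  u :: 'c => 'c => real for player 1; player 2's utility is u2 s1 s2 = u s2 s1.\<close>

definition mixed :: "('c::finite \<Rightarrow> real) \<Rightarrow> bool" where
  "mixed x \<longleftrightarrow> (\<forall>c. 0 \<le> x c) \<and> (\<Sum>c\<in>UNIV. x c) = 1"

definition payoff1 :: "('c::finite \<Rightarrow> 'c \<Rightarrow> real) \<Rightarrow> ('c \<Rightarrow> real) \<Rightarrow> ('c \<Rightarrow> real) \<Rightarrow> real" where
  "payoff1 u x y = (\<Sum>a\<in>UNIV. \<Sum>b\<in>UNIV. x a * y b * u a b)"

definition payoff2 :: "('c::finite \<Rightarrow> 'c \<Rightarrow> real) \<Rightarrow> ('c \<Rightarrow> real) \<Rightarrow> ('c \<Rightarrow> real) \<Rightarrow> real" where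
  "payoff2 u x y = (\<Sum>a\<in>UNIV. \<Sum>b\<in>UNIV. x a * y b * u b a)"

definition nash :: "('c::finite \<Rightarrow> 'c \<Rightarrow> real) \<Rightarrow> ('c \<Rightarrow> real) \<Rightarrow> ('c \<Rightarrow> real) \<Rightarrow> bool" where
  "nash u x y \<longleftrightarrow> mixed x \<and> mixed y
     \<and> (\<forall>x'. mixed x' \<longrightarrow> payoff1 u x' y \<le> payoff1 u x y)
     \<and> (\<forall>y'. mixed y' \<longrightarrow> payoff2 u x y' \<le> payoff2 u x y)"

definition sym_nash :: "('c::finite \<Rightarrow> 'c \<Rightarrow> real) \<Rightarrow> ('c \<Rightarrow> real) \<Rightarrow> bool" where
  "sym_nash u x \<longleftrightarrow> nash u x x"

text \<open>State of the world: distribution P.  Private noises: Q1, Q2, independent of each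
  other and of the state, so the underlying probability space is P x (Q1 x Q2),
  with points (state, (noise1, noise2)).  Player i's information is gi state noise_i
  (in the measurable space Ii), and his action is fi applied to his information.\<close>

definition correlation_scheme ::
  "'w measure \<Rightarrow> 'n1 measure \<Rightarrow> 'n2 measure \<Rightarrow> 'i1 measure \<Rightarrow> 'i2 measure \<Rightarrow>
   ('w \<Rightarrow> 'n1 \<Rightarrow> 'i1) \<Rightarrow> ('w \<Rightarrow> 'n2 \<Rightarrow> 'i2) \<Rightarrow> ('i1 \<Rightarrow> 'c) \<Rightarrow> ('i2 \<Rightarrow> 'c) \<Rightarrow> bool" where
  "correlation_scheme P Q1 Q2 I1 I2 g1 g2 f1 f2 \<longleftrightarrow>
     prob_space P \<and> prob_space Q1 \<and> prob_space Q2
     \<and> (\<lambda>(w, n). g1 w n) \<in> P \<Otimes>\<^sub>M Q1 \<rightarrow>\<^sub>M I1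
     \<and> (\<lambda>(w, n). g2 w n) \<in> P \<Otimes>\<^sub>M Q2 \<rightarrow>\<^sub>M I2
     \<and> f1 \<in> I1 \<rightarrow>\<^sub>M count_space UNIV
     \<and> f2 \<in> I2 \<rightarrow>\<^sub>M count_space UNIV"

definition exp_util1 ::
  "('c \<Rightarrow> 'c \<Rightarrow> real) \<Rightarrow> 'w measure \<Rightarrow> 'n1 measure \<Rightarrow> 'n2 measure \<Rightarrow>
   ('w \<Rightarrow> 'n1 \<Rightarrow> 'i1) \<Rightarrow> ('w \<Rightarrow> 'n2 \<Rightarrow> 'i2) \<Rightarrow> ('i1 \<Rightarrow> 'c) \<Rightarrow> ('i2 \<Rightarrow> 'c) \<Rightarrow> real" where
  "exp_util1 u P Q1 Q2 g1 g2 a1 a2 =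
     (\<integral>z. u (a1 (g1 (fst z) (fst (snd z)))) (a2 (g2 (fst z) (snd (snd z)))) \<partial>(P \<Otimes>\<^sub>M (Q1 \<Otimes>\<^sub>M Q2)))"

definition exp_util2 ::
  "('c \<Rightarrow> 'c \<Rightarrow> real) \<Rightarrow> 'w measure \<Rightarrow> 'n1 measure \<Rightarrow> 'n2 measure \<Rightarrow>
   ('w \<Rightarrow> 'n1 \<Rightarrow> 'i1) \<Rightarrow> ('w \<Rightarrow> 'n2 \<Rightarrow> 'i2) \<Rightarrow> ('i1 \<Rightarrow> 'c) \<Rightarrow> ('i2 \<Rightarrow> 'c) \<Rightarrow> real" where
  "exp_util2 u P Q1 Q2 g1 g2 a1 a2 =
     (\<integral>z. u (a2 (g2 (fst z) (snd (snd z)))) (a1 (g1 (fst z) (fst (snd z)))) \<partial>(P \<Otimes>\<^sub>M (Q1 \<Otimes>\<^sub>M Q2)))"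

definition indirect_CE ::
  "('c \<Rightarrow> 'c \<Rightarrow> real) \<Rightarrow> 'w measure \<Rightarrow> 'n1 measure \<Rightarrow> 'n2 measure \<Rightarrow> 'i1 measure \<Rightarrow> 'i2 measure \<Rightarrow>
   ('w \<Rightarrow> 'n1 \<Rightarrow> 'i1) \<Rightarrow> ('w \<Rightarrow> 'n2 \<Rightarrow> 'i2) \<Rightarrow> ('i1 \<Rightarrow> 'c) \<Rightarrow> ('i2 \<Rightarrow> 'c) \<Rightarrow> bool" where
  "indirect_CE u P Q1 Q2 I1 I2 g1 g2 f1 f2 \<longleftrightarrow>
     correlation_scheme P Q1 Q2 I1 I2 g1 g2 f1 f2
     \<and> (\<forall>f' \<in> I1 \<rightarrow>\<^sub>M count_space UNIV.
          exp_util1 u P Q1 Q2 g1 g2 f' f2 \<le> exp_util1 u P Q1 Q2 g1 g2 f1 f2)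
     \<and> (\<forall>f' \<in> I2 \<rightarrow>\<^sub>M count_space UNIV.
          exp_util2 u P Q1 Q2 g1 g2 f1 f' \<le> exp_util2 u P Q1 Q2 g1 g2 f1 f2)"

definition fully_symmetric ::
  "'n measure \<Rightarrow> 'n measure \<Rightarrow> 'i measure \<Rightarrow> 'i measure \<Rightarrow>
   ('w \<Rightarrow> 'n \<Rightarrow> 'i) \<Rightarrow> ('w \<Rightarrow> 'n \<Rightarrow> 'i) \<Rightarrow> ('i \<Rightarrow> 'c) \<Rightarrow> ('i \<Rightarrow> 'c) \<Rightarrow> bool" where
  "fully_symmetric Q1 Q2 I1 I2 g1 g2 f1 f2 \<longleftrightarrow> Q1 = Q2 \<and> I1 = I2 \<and> g1 = g2 \<and> f1 = f2"

definition knows_state :: "'w measure \<Rightarrow> 'n measure \<Rightarrow> 'i measure \<Rightarrow> ('w \<Rightarrow> 'n \<Rightarrow> 'i) \<Rightarrow> bool" where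
  "knows_state P Q I g \<longleftrightarrow>
     (\<exists>h \<in> I \<rightarrow>\<^sub>M P. \<forall>w \<in> space P. \<forall>n \<in> space Q. h (g w n) = w)"

text \<open>Conditional distribution of a player's action given the state w
  (the noise is independent of the state).\<close>
definition cond_dist :: "'n measure \<Rightarrow> ('w \<Rightarrow> 'n \<Rightarrow> 'i) \<Rightarrow> ('i \<Rightarrow> 'c) \<Rightarrow> 'w \<Rightarrow> 'c \<Rightarrow> real" where
  "cond_dist Q g f w c = measure Q {n \<in> space Q. f (g w n) = c}"

end

theory Submission
  imports Defs
begin

text \<open>The noises are independent of each other and of the state, so given the state \<open>w\<close>
  the two actions are independent with laws \<open>cond_dist Q1 g1 f1 w\<close> and
  \<open>cond_dist Q2 g2 f2 w\<close>; every expected utility is therefore the \<open>P\<close>-average of the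
  mixed-strategy payoff at these conditional laws. A player who knows the state can switch to
  a pure action \<open>c\<close> exactly on the measurable set of states where \<open>c\<close> beats his conditional
  strategy. In equilibrium this gains nothing, so that set is null: almost surely the
  conditional strategy is a best reply to the other one, and under full symmetry the two
  conditional strategies coincide. Conversely, a symmetric Nash equilibrium \<open>x\<close> is realized
  with a trivial state and private noises drawn from \<open>x\<close>, each player playing his noise.\<close>

lemma integral_finite_range:
  fixes G :: "'a \<Rightarrow> 'c::finite" and \<phi> :: "'c \<Rightarrow> real"
  assumes "finite_measure M" and G: "G \<in> M \<rightarrow>\<^sub>M count_space UNIV"
  shows "(\<integral>z. \<phi> (G z) \<partial>M) = (\<Sum>c\<in>UNIV. measure M {z \<in> space M. G z = c} * \<phi> c)"
proof -
  interpret finite_measure M by fact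
  let ?D = "distr M (count_space UNIV) G"
  have "(\<integral>z. \<phi> (G z) \<partial>M) = (\<integral>c. \<phi> c * indicator UNIV c \<partial>?D)"
    using G by (simp add: integral_distr)
  also have "\<dots> = (\<Sum>c\<in>UNIV. \<phi> c * measure ?D {c})"
    using G by (intro integral_indicator_finite_real)
      (auto simp: emeasure_distr emeasure_finite less_top[symmetric])
  also have "\<dots> = (\<Sum>c\<in>UNIV. measure M {z \<in> space M. G z = c} * \<phi> c)"
    using G by (intro sum.cong) (auto simp: measure_distr vimage_def Int_def conj_commute)
  finally show ?thesis .
qed

lemma AE_le_0_if_integral_max_0_le_0:
  fixes f :: "'a \<Rightarrow> real"
  assumes "integrable M (\<lambda>x. max 0 (f x))" and "(\<integral>x. max 0 (f x) \<partial>M) \<le> 0"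
  shows "AE x in M. f x \<le> 0"
proof -
  have "0 \<le> (\<integral>x. max 0 (f x) \<partial>M)"
    by (rule integral_nonneg_AE) simp
  with assms(2) have "(\<integral>x. max 0 (f x) \<partial>M) = 0" by simp
  then have "AE x in M. max 0 (f x) = 0"
    using integral_nonneg_eq_0_iff_AE[OF assms(1)] by simp
  then show ?thesis by eventually_elim simp
qed

lemma sets_cond_dist_event:
  assumes [measurable]: "(\<lambda>(w, n). g w n) \<in> P \<Otimes>\<^sub>M Q \<rightarrow>\<^sub>M I" "f \<in> I \<rightarrow>\<^sub>M count_space UNIV"
    and w: "w \<in> space P"
  shows "{n \<in> space Q. f (g w n) = c} \<in> sets Q"
proof -
  have "{z \<in> space (P \<Otimes>\<^sub>M Q). f (g (fst z) (snd z)) = c} \<in> sets (P \<Otimes>\<^sub>M Q)"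
    by measurable
  from sets_Pair1[OF this, of w] w show ?thesis
    by (simp add: space_pair_measure vimage_def)
qed

lemma measurable_cond_dist:
  assumes "sigma_finite_measure Q"
    and [measurable]: "(\<lambda>(w, n). g w n) \<in> P \<Otimes>\<^sub>M Q \<rightarrow>\<^sub>M I" "f \<in> I \<rightarrow>\<^sub>M count_space UNIV"
  shows "(\<lambda>w. cond_dist Q g f w c) \<in> borel_measurable P"
proof -
  interpret Q: sigma_finite_measure Q by fact
  show ?thesis unfolding cond_dist_def measure_def by measurable
qed

lemma cond_dist_nonneg: "0 \<le> cond_dist Q g f w c"
  by (simp add: cond_dist_def)

lemma cond_dist_le_1: "prob_space Q \<Longrightarrow> cond_dist Q g f w c \<le> 1"
  by (simp add: cond_dist_def prob_space.prob_le_1)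

lemma mixed_cond_dist:
  fixes f :: "'i \<Rightarrow> 'c::finite"
  assumes Q: "prob_space Q"
    and g: "(\<lambda>(w, n). g w n) \<in> P \<Otimes>\<^sub>M Q \<rightarrow>\<^sub>M I" and f: "f \<in> I \<rightarrow>\<^sub>M count_space UNIV"
    and w: "w \<in> space P"
  shows "mixed (cond_dist Q g f w)"
proof -
  interpret Q: prob_space Q by fact
  have "(\<Sum>c\<in>UNIV. cond_dist Q g f w c) = measure Q (\<Union>c. {n \<in> space Q. f (g w n) = c})"
    unfolding cond_dist_def
    by (rule measure_finite_Union[symmetric])
       (auto simp: disjoint_family_on_def sets_cond_dist_event[OF g f w])
  also have "(\<Union>c. {n \<in> space Q. f (g w n) = c}) = space Q" by auto
  finally show ?thesis by (simp add: mixed_def cond_dist_nonneg Q.prob_space)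
qed

lemma measure_joint_actions:
  fixes f1 :: "'i1 \<Rightarrow> 'c" and f2 :: "'i2 \<Rightarrow> 'c"
  assumes Q1: "prob_space Q1" and Q2: "prob_space Q2"
    and g1: "(\<lambda>(w, n). g1 w n) \<in> P \<Otimes>\<^sub>M Q1 \<rightarrow>\<^sub>M I1" and f1: "f1 \<in> I1 \<rightarrow>\<^sub>M count_space UNIV"
    and g2: "(\<lambda>(w, n). g2 w n) \<in> P \<Otimes>\<^sub>M Q2 \<rightarrow>\<^sub>M I2" and f2: "f2 \<in> I2 \<rightarrow>\<^sub>M count_space UNIV"
  shows "measure (P \<Otimes>\<^sub>M (Q1 \<Otimes>\<^sub>M Q2))
           {z \<in> space (P \<Otimes>\<^sub>M (Q1 \<Otimes>\<^sub>M Q2)).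
              f1 (g1 (fst z) (fst (snd z))) = a \<and> f2 (g2 (fst z) (snd (snd z))) = b}
       = (\<integral>w. cond_dist Q1 g1 f1 w a * cond_dist Q2 g2 f2 w b \<partial>P)"
    (is "measure ?M ?S = _")
proof -
  interpret Q1: prob_space Q1 by fact
  interpret Q2: prob_space Q2 by fact
  interpret Q12: prob_space "Q1 \<Otimes>\<^sub>M Q2" by (rule prob_space_pair) unfold_locales
  note [measurable] = g1 f1 g2 f2
    measurable_cond_dist[OF Q1.sigma_finite_measure_axioms g1 f1]
    measurable_cond_dist[OF Q2.sigma_finite_measure_axioms g2 f2]
  have "?S \<in> sets ?M"
    by measurable
  then have "emeasure ?M ?S = (\<integral>\<^sup>+w. emeasure (Q1 \<Otimes>\<^sub>M Q2) (Pair w -` ?S) \<partial>P)"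
    by (rule Q12.emeasure_pair_measure_alt)
  also have "\<dots> = (\<integral>\<^sup>+w. ennreal (cond_dist Q1 g1 f1 w a * cond_dist Q2 g2 f2 w b) \<partial>P)"
  proof (rule nn_integral_cong)
    fix w assume w: "w \<in> space P"
    then have "Pair w -` ?S = {n \<in> space Q1. f1 (g1 w n) = a} \<times> {n \<in> space Q2. f2 (g2 w n) = b}"
      by (auto simp: space_pair_measure)
    then show "emeasure (Q1 \<Otimes>\<^sub>M Q2) (Pair w -` ?S)
        = ennreal (cond_dist Q1 g1 f1 w a * cond_dist Q2 g2 f2 w b)"
      by (simp add: Q2.emeasure_pair_measure_Times sets_cond_dist_event[OF g1 f1 w]
          sets_cond_dist_event[OF g2 f2 w] Q1.emeasure_eq_measure Q2.emeasure_eq_measure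
          cond_dist_def ennreal_mult)
  qed
  finally show ?thesis
    by (simp add: measure_def integral_eq_nn_integral cond_dist_nonneg)
qed

lemma integrable_cond_dist_mult:
  assumes P: "prob_space P" and Q1: "prob_space Q1" and Q2: "prob_space Q2"
    and g1: "(\<lambda>(w, n). g1 w n) \<in> P \<Otimes>\<^sub>M Q1 \<rightarrow>\<^sub>M I1" and f1: "f1 \<in> I1 \<rightarrow>\<^sub>M count_space UNIV"
    and g2: "(\<lambda>(w, n). g2 w n) \<in> P \<Otimes>\<^sub>M Q2 \<rightarrow>\<^sub>M I2" and f2: "f2 \<in> I2 \<rightarrow>\<^sub>M count_space UNIV"
  shows "integrable P (\<lambda>w. cond_dist Q1 g1 f1 w a * cond_dist Q2 g2 f2 w b * r)"
proof -
  interpret P: prob_space P by fact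
  interpret Q1: prob_space Q1 by fact
  interpret Q2: prob_space Q2 by fact
  note [measurable] =
    measurable_cond_dist[OF Q1.sigma_finite_measure_axioms g1 f1]
    measurable_cond_dist[OF Q2.sigma_finite_measure_axioms g2 f2]
  have "cond_dist Q1 g1 f1 w a * cond_dist Q2 g2 f2 w b \<le> 1" for w
    using Q1 Q2 by (intro mult_le_one) (auto simp: cond_dist_nonneg cond_dist_le_1)
  then have "AE w in P. norm (cond_dist Q1 g1 f1 w a * cond_dist Q2 g2 f2 w b * r) \<le> \<bar>r\<bar>"
    by (intro AE_I2) (simp add: abs_mult cond_dist_nonneg mult_left_le_one_le)
  moreover have "(\<lambda>w. cond_dist Q1 g1 f1 w a * cond_dist Q2 g2 f2 w b * r) \<in> borel_measurable P"
    by measurable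
  ultimately show ?thesis by (rule P.integrable_const_bound)
qed

lemma integral_actions_eq_integral_payoff1:
  fixes f1 :: "'i1 \<Rightarrow> 'c::finite" and f2 :: "'i2 \<Rightarrow> 'c" and v :: "'c \<Rightarrow> 'c \<Rightarrow> real"
  assumes P: "prob_space P" and Q1: "prob_space Q1" and Q2: "prob_space Q2"
    and g1: "(\<lambda>(w, n). g1 w n) \<in> P \<Otimes>\<^sub>M Q1 \<rightarrow>\<^sub>M I1" and f1: "f1 \<in> I1 \<rightarrow>\<^sub>M count_space UNIV"
    and g2: "(\<lambda>(w, n). g2 w n) \<in> P \<Otimes>\<^sub>M Q2 \<rightarrow>\<^sub>M I2" and f2: "f2 \<in> I2 \<rightarrow>\<^sub>M count_space UNIV"
  shows "(\<integral>z. v (f1 (g1 (fst z) (fst (snd z)))) (f2 (g2 (fst z) (snd (snd z))))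
            \<partial>(P \<Otimes>\<^sub>M (Q1 \<Otimes>\<^sub>M Q2)))
       = (\<integral>w. payoff1 v (cond_dist Q1 g1 f1 w) (cond_dist Q2 g2 f2 w) \<partial>P)"
proof -
  let ?M = "P \<Otimes>\<^sub>M (Q1 \<Otimes>\<^sub>M Q2)"
  let ?A = "\<lambda>z. (f1 (g1 (fst z) (fst (snd z))), f2 (g2 (fst z) (snd (snd z))))"
  have "prob_space ?M"
    using P Q1 Q2 by (simp add: prob_space_pair)
  then have M: "finite_measure ?M" by (rule prob_space.axioms)
  note [measurable] = g1 f1 g2 f2
  have "?A \<in> ?M \<rightarrow>\<^sub>M count_space UNIV"
    by measurable
  then have "(\<integral>z. case_prod v (?A z) \<partial>?M)
      = (\<Sum>ab\<in>UNIV. measure ?M {z \<in> space ?M. ?A z = ab} * case_prod v ab)"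
    by (rule integral_finite_range[OF M])
  also have "\<dots> = (\<Sum>a\<in>UNIV. \<Sum>b\<in>UNIV. measure ?M {z \<in> space ?M. ?A z = (a, b)} * v a b)"
    unfolding sum.cartesian_product UNIV_Times_UNIV by (simp add: case_prod_unfold prod_eq_iff)
  also have "\<dots> = (\<Sum>a\<in>UNIV. \<Sum>b\<in>UNIV.
      (\<integral>w. cond_dist Q1 g1 f1 w a * cond_dist Q2 g2 f2 w b * v a b \<partial>P))"
    by (simp add: measure_joint_actions[OF Q1 Q2 g1 f1 g2 f2])
  also have "\<dots> = (\<integral>w. payoff1 v (cond_dist Q1 g1 f1 w) (cond_dist Q2 g2 f2 w) \<partial>P)"
    unfolding payoff1_def
    by (simp only: Bochner_Integration.integral_sum Bochner_Integration.integrable_sum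
        integrable_cond_dist_mult[OF P Q1 Q2 g1 f1 g2 f2])
  finally show ?thesis by simp
qed

lemma exp_util1_eq_integral_payoff1:
  fixes u :: "'c::finite \<Rightarrow> 'c \<Rightarrow> real" and a1 :: "'i1 \<Rightarrow> 'c" and a2 :: "'i2 \<Rightarrow> 'c"
  assumes "correlation_scheme P Q1 Q2 I1 I2 g1 g2 f1 f2"
    and "a1 \<in> I1 \<rightarrow>\<^sub>M count_space UNIV" and "a2 \<in> I2 \<rightarrow>\<^sub>M count_space UNIV"
  shows "exp_util1 u P Q1 Q2 g1 g2 a1 a2
       = (\<integral>w. payoff1 u (cond_dist Q1 g1 a1 w) (cond_dist Q2 g2 a2 w) \<partial>P)"
  using assms unfolding correlation_scheme_def exp_util1_def
  by (intro integral_actions_eq_integral_payoff1) auto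

lemma exp_util2_eq_integral_payoff2:
  fixes u :: "'c::finite \<Rightarrow> 'c \<Rightarrow> real" and a1 :: "'i1 \<Rightarrow> 'c" and a2 :: "'i2 \<Rightarrow> 'c"
  assumes "correlation_scheme P Q1 Q2 I1 I2 g1 g2 f1 f2"
    and "a1 \<in> I1 \<rightarrow>\<^sub>M count_space UNIV" and "a2 \<in> I2 \<rightarrow>\<^sub>M count_space UNIV"
  shows "exp_util2 u P Q1 Q2 g1 g2 a1 a2
       = (\<integral>w. payoff2 u (cond_dist Q1 g1 a1 w) (cond_dist Q2 g2 a2 w) \<partial>P)"
proof -
  have "payoff2 u = payoff1 (\<lambda>a b. u b a)"
    by (simp add: fun_eq_iff payoff1_def payoff2_def)
  moreover have "exp_util2 u P Q1 Q2 g1 g2 a1 a2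
      = (\<integral>w. payoff1 (\<lambda>a b. u b a) (cond_dist Q1 g1 a1 w) (cond_dist Q2 g2 a2 w) \<partial>P)"
    using assms unfolding correlation_scheme_def exp_util2_def
    by (intro integral_actions_eq_integral_payoff1[where v="\<lambda>a b. u b a"]) auto
  ultimately show ?thesis by simp
qed

lemma payoff1_eq_sum_pure: "payoff1 u x y = (\<Sum>a\<in>UNIV. x a * payoff1 u (indicator {a}) y)"
proof -
  have "payoff1 u (indicator {a}) y = (\<Sum>a'\<in>UNIV. indicator {a} a' * (\<Sum>b\<in>UNIV. y b * u a' b))" for a
    unfolding payoff1_def by (simp only: sum_distrib_left mult.assoc)
  then have pure: "payoff1 u (indicator {a}) y = (\<Sum>b\<in>UNIV. y b * u a b)" for a
    by simp
  show ?thesis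
    by (simp only: pure) (simp add: payoff1_def sum_distrib_left mult.assoc)
qed

lemma payoff2_eq_payoff1: "payoff2 u x y = payoff1 u y x"
  unfolding payoff1_def payoff2_def by (subst sum.swap) (simp add: mult_ac)

lemma sym_nashI:
  assumes x: "mixed x" and pure: "\<And>c. payoff1 u (indicator {c}) x \<le> payoff1 u x x"
  shows "sym_nash u x"
proof -
  have "payoff1 u x' x \<le> payoff1 u x x" if "mixed x'" for x'
  proof -
    have "payoff1 u x' x \<le> (\<Sum>a\<in>UNIV. x' a * payoff1 u x x)"
      unfolding payoff1_eq_sum_pure[of u x']
      using that by (intro sum_mono mult_left_mono pure) (auto simp: mixed_def)
    also have "\<dots> = payoff1 u x x"
      using that by (simp add: sum_distrib_right[symmetric] mixed_def)
    finally show ?thesis .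
  qed
  with x show ?thesis by (simp add: sym_nash_def nash_def payoff2_eq_payoff1)
qed

lemma cond_dist_switch:
  assumes Q: "prob_space Q" and knows: "\<And>n. n \<in> space Q \<Longrightarrow> h (g w n) = w"
  shows "cond_dist Q g (\<lambda>i. if h i \<in> B then c else f i) w
       = (if w \<in> B then indicator {c} else cond_dist Q g f w)"
proof (cases "w \<in> B")
  case True
  then have "{n \<in> space Q. (if h (g w n) \<in> B then c else f (g w n)) = a}
      = (if c = a then space Q else {})" for a
    using knows by auto
  with True show ?thesis
    by (simp add: cond_dist_def fun_eq_iff prob_space.prob_space[OF Q] indicator_def)
next
  case False
  then have "{n \<in> space Q. (if h (g w n) \<in> B then c else f (g w n)) = a}
      = {n \<in> space Q. f (g w n) = a}" for a
    using knows by auto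
  with False show ?thesis
    by (simp add: cond_dist_def fun_eq_iff)
qed

lemma integrable_payoff1_cond_dist:
  assumes "correlation_scheme P Q1 Q2 I1 I2 g1 g2 f1 f2"
    and "a1 \<in> I1 \<rightarrow>\<^sub>M count_space UNIV" and "a2 \<in> I2 \<rightarrow>\<^sub>M count_space UNIV"
  shows "integrable P (\<lambda>w. payoff1 u (cond_dist Q1 g1 a1 w) (cond_dist Q2 g2 a2 w))"
  using assms unfolding correlation_scheme_def payoff1_def
  by (intro Bochner_Integration.integrable_sum integrable_cond_dist_mult) auto

lemma AE_switch_to_pure_unprofitable:
  fixes u :: "'c::finite \<Rightarrow> 'c \<Rightarrow> real" and f1 :: "'i1 \<Rightarrow> 'c" and f2 :: "'i2 \<Rightarrow> 'c"
  assumes cs: "correlation_scheme P Q1 Q2 I1 I2 g1 g2 f1 f2"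
    and best: "\<forall>f'\<in>I1 \<rightarrow>\<^sub>M count_space UNIV.
                 exp_util1 u P Q1 Q2 g1 g2 f' f2 \<le> exp_util1 u P Q1 Q2 g1 g2 f1 f2"
    and knows: "knows_state P Q1 I1 g1"
  shows "AE w in P. payoff1 u (indicator {c}) (cond_dist Q2 g2 f2 w)
                    \<le> payoff1 u (cond_dist Q1 g1 f1 w) (cond_dist Q2 g2 f2 w)"
proof -
  from cs have Q1: "prob_space Q1" and Q2: "prob_space Q2"
    and g1: "(\<lambda>(w, n). g1 w n) \<in> P \<Otimes>\<^sub>M Q1 \<rightarrow>\<^sub>M I1" and f1: "f1 \<in> I1 \<rightarrow>\<^sub>M count_space UNIV"
    and g2: "(\<lambda>(w, n). g2 w n) \<in> P \<Otimes>\<^sub>M Q2 \<rightarrow>\<^sub>M I2" and f2: "f2 \<in> I2 \<rightarrow>\<^sub>M count_space UNIV"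
    unfolding correlation_scheme_def by blast+
  interpret Q1: prob_space Q1 by fact
  interpret Q2: prob_space Q2 by fact
  note [measurable] = f1
    measurable_cond_dist[OF Q1.sigma_finite_measure_axioms g1 f1]
    measurable_cond_dist[OF Q2.sigma_finite_measure_axioms g2 f2]
  from knows obtain h where [measurable]: "h \<in> I1 \<rightarrow>\<^sub>M P"
    and hg: "\<And>w n. w \<in> space P \<Longrightarrow> n \<in> space Q1 \<Longrightarrow> h (g1 w n) = w"
    unfolding knows_state_def by blast
  define X1 where "X1 = cond_dist Q1 g1 f1"
  define X2 where "X2 = cond_dist Q2 g2 f2"
  define gain where "gain w = payoff1 u (indicator {c}) (X2 w) - payoff1 u (X1 w) (X2 w)" for w
  define B where "B = {w \<in> space P. 0 < gain w}"
  have [measurable]: "B \<in> sets P"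
    unfolding B_def gain_def payoff1_def X1_def X2_def by measurable
  \<comment> \<open>knowing the state, player 1 can play \<open>c\<close> exactly where it is a profitable deviation\<close>
  define f' where "f' = (\<lambda>i. if h i \<in> B then c else f1 i)"
  have f': "f' \<in> I1 \<rightarrow>\<^sub>M count_space UNIV"
    unfolding f'_def by measurable
  have switch: "payoff1 u (cond_dist Q1 g1 f' w) (X2 w) - payoff1 u (X1 w) (X2 w) = max 0 (gain w)"
    if "w \<in> space P" for w
    using that cond_dist_switch[of Q1 h g1 w B c f1, OF Q1 hg[OF that]]
    unfolding f'_def by (cases "w \<in> B") (auto simp: B_def gain_def X1_def)
  have int_f': "integrable P (\<lambda>w. payoff1 u (cond_dist Q1 g1 f' w) (X2 w))"
    and int_f1: "integrable P (\<lambda>w. payoff1 u (X1 w) (X2 w))"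
    unfolding X1_def X2_def using cs f' f1 f2 by (auto intro: integrable_payoff1_cond_dist)
  have "integrable P (\<lambda>w. max 0 (gain w))"
    using Bochner_Integration.integrable_diff[OF int_f' int_f1]
    by (rule Bochner_Integration.integrable_cong[OF refl, THEN iffD1, rotated]) (simp add: switch)
  moreover have "(\<integral>w. max 0 (gain w) \<partial>P)
      = exp_util1 u P Q1 Q2 g1 g2 f' f2 - exp_util1 u P Q1 Q2 g1 g2 f1 f2"
    by (simp add: exp_util1_eq_integral_payoff1[OF cs] f' f1 f2 X1_def[symmetric] X2_def[symmetric]
        Bochner_Integration.integral_diff[OF int_f' int_f1, symmetric] switch
        cong: Bochner_Integration.integral_cong)
  with best f' have "(\<integral>w. max 0 (gain w) \<partial>P) \<le> 0" by auto
  ultimately have "AE w in P. gain w \<le> 0"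
    by (rule AE_le_0_if_integral_max_0_le_0)
  then show ?thesis by (simp add: gain_def X1_def X2_def)
qed

lemma AE_sym_nash_cond_dist:
  fixes u :: "'c::finite \<Rightarrow> 'c \<Rightarrow> real" and f :: "'i \<Rightarrow> 'c"
  assumes CE: "indirect_CE u P Q Q I I g g f f" and knows: "knows_state P Q I g"
  shows "AE w in P. sym_nash u (cond_dist Q g f w)"
proof -
  from CE have cs: "correlation_scheme P Q Q I I g g f f"
    and best: "\<forall>f'\<in>I \<rightarrow>\<^sub>M count_space UNIV.
                 exp_util1 u P Q Q g g f' f \<le> exp_util1 u P Q Q g g f f"
    unfolding indirect_CE_def by blast+
  have "AE w in P. \<forall>c\<in>UNIV.
      payoff1 u (indicator {c}) (cond_dist Q g f w) \<le> payoff1 u (cond_dist Q g f w) (cond_dist Q g f w)"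
    by (intro AE_finite_allI AE_switch_to_pure_unprofitable[OF cs best knows]) simp
  with AE_space show ?thesis
  proof eventually_elim
    case (elim w)
    with cs show ?case
      unfolding correlation_scheme_def by (auto intro: sym_nashI mixed_cond_dist)
  qed
qed

lemma prob_space_point_measure_mixed:
  assumes "mixed x"
  shows "prob_space (point_measure UNIV (\<lambda>c. ennreal (x c)))"
proof (rule prob_spaceI)
  have "emeasure (point_measure UNIV (\<lambda>c. ennreal (x c))) UNIV = ennreal (\<Sum>c\<in>UNIV. x c)"
    using assms by (simp add: emeasure_point_measure_finite mixed_def)
  with assms show "emeasure (point_measure UNIV (\<lambda>c. ennreal (x c))) (space (point_measure UNIV (\<lambda>c. ennreal (x c)))) = 1"
    by (simp add: mixed_def space_point_measure)
qed

lemma cond_dist_point_measure: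
  assumes "mixed x"
  shows "cond_dist (point_measure UNIV (\<lambda>c. ennreal (x c))) (\<lambda>_ n. n) id w = x"
proof
  fix c
  have "{n \<in> space (point_measure UNIV (\<lambda>c. ennreal (x c))). id n = c} = {c}"
    by (auto simp: space_point_measure)
  with assms show "cond_dist (point_measure UNIV (\<lambda>c. ennreal (x c))) (\<lambda>_ n. n) id w c = x c"
    by (simp add: cond_dist_def measure_def emeasure_point_measure_finite mixed_def)
qed

lemma indirect_CE_lottery:
  fixes u :: "'c::finite \<Rightarrow> 'c \<Rightarrow> real"
  assumes "sym_nash u x"
  defines "P \<equiv> return (count_space UNIV) ()" and "Q \<equiv> point_measure UNIV (\<lambda>c. ennreal (x c))"
  shows "indirect_CE u P Q Q (count_space UNIV) (count_space UNIV) (\<lambda>_ n. n) (\<lambda>_ n. n) id id"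
proof -
  from assms have nash: "nash u x x" and x: "mixed x"
    by (auto simp: sym_nash_def nash_def)
  have Q: "prob_space Q"
    unfolding Q_def by (rule prob_space_point_measure_mixed[OF x])
  have g: "(\<lambda>(w, n). n) \<in> P \<Otimes>\<^sub>M Q \<rightarrow>\<^sub>M count_space UNIV"
    unfolding Q_def by (simp add: measurable_split_conv sets_point_measure_count_space)
  have P: "prob_space P"
    unfolding P_def by (simp add: prob_space_return)
  have cs: "correlation_scheme P Q Q (count_space UNIV) (count_space UNIV) (\<lambda>_ n. n) (\<lambda>_ n. n) id id"
    using P Q g by (simp add: correlation_scheme_def)
  have cond_dist_x: "cond_dist Q (\<lambda>_ n. n) id w = x" for w
    unfolding Q_def by (rule cond_dist_point_measure[OF x])
  have "mixed (cond_dist Q (\<lambda>_ n. n) f' ())" for f' :: "'c \<Rightarrow> 'c"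
    using mixed_cond_dist[OF Q g] by (simp add: P_def)
  with nash show ?thesis
    unfolding indirect_CE_def nash_def
    by (simp add: cs exp_util1_eq_integral_payoff1[OF cs] exp_util2_eq_integral_payoff2[OF cs]
        cond_dist_x prob_space.prob_space[OF P])
qed

theorem proposition4p5:
  fixes u :: "'c::finite \<Rightarrow> 'c \<Rightarrow> real"
  shows "(\<forall>(P::'w measure) (Q1::'n measure) (Q2::'n measure) (I1::'i measure) (I2::'i measure)
            g1 g2 (f1::'i \<Rightarrow> 'c) f2.
            indirect_CE u P Q1 Q2 I1 I2 g1 g2 f1 f2
            \<and> fully_symmetric Q1 Q2 I1 I2 g1 g2 f1 f2
            \<and> knows_state P Q1 I1 g1 \<and> knows_state P Q2 I2 g2
            \<longrightarrow> (AE w in P. nash u (cond_dist Q1 g1 f1 w) (cond_dist Q2 g2 f2 w)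
                              \<and> cond_dist Q1 g1 f1 w = cond_dist Q2 g2 f2 w))
       \<and> (\<forall>x. sym_nash u x \<longrightarrow>
            (\<exists>(P::unit measure) (Q1::'c measure) (Q2::'c measure) (I1::'c measure) (I2::'c measure)
               g1 g2 (f1::'c \<Rightarrow> 'c) f2.
               indirect_CE u P Q1 Q2 I1 I2 g1 g2 f1 f2
               \<and> fully_symmetric Q1 Q2 I1 I2 g1 g2 f1 f2
               \<and> knows_state P Q1 I1 g1 \<and> knows_state P Q2 I2 g2
               \<and> (AE w in P. cond_dist Q1 g1 f1 w = x \<and> cond_dist Q2 g2 f2 w = x)))"
proof (intro conjI allI impI)
  fix P :: "'w measure" and Q1 Q2 :: "'n measure" and I1 I2 :: "'i measure"
    and g1 g2 :: "'w \<Rightarrow> 'n \<Rightarrow> 'i" and f1 f2 :: "'i \<Rightarrow> 'c"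
  assume H: "indirect_CE u P Q1 Q2 I1 I2 g1 g2 f1 f2 \<and> fully_symmetric Q1 Q2 I1 I2 g1 g2 f1 f2
    \<and> knows_state P Q1 I1 g1 \<and> knows_state P Q2 I2 g2"
  then have "Q2 = Q1" "I2 = I1" "g2 = g1" "f2 = f1"
    by (simp_all add: fully_symmetric_def)
  moreover have "AE w in P. sym_nash u (cond_dist Q1 g1 f1 w)"
    using H calculation by (intro AE_sym_nash_cond_dist) auto
  ultimately show "AE w in P. nash u (cond_dist Q1 g1 f1 w) (cond_dist Q2 g2 f2 w)
                              \<and> cond_dist Q1 g1 f1 w = cond_dist Q2 g2 f2 w"
    by (simp add: sym_nash_def)
next
  fix x :: "'c \<Rightarrow> real"
  assume x: "sym_nash u x"
  let ?P = "return (count_space UNIV) ()" and ?Q = "point_measure UNIV (\<lambda>c. ennreal (x c))"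
  have "knows_state ?P ?Q (count_space UNIV) (\<lambda>_ n. n)"
    unfolding knows_state_def by (intro bexI[of _ "\<lambda>_. ()"]) auto
  moreover have "AE w in ?P. cond_dist ?Q (\<lambda>_ n. n) id w = x \<and> cond_dist ?Q (\<lambda>_ n. n) id w = x"
    using x by (simp add: cond_dist_point_measure sym_nash_def nash_def)
  ultimately show "\<exists>(P::unit measure) (Q1::'c measure) (Q2::'c measure) (I1::'c measure) (I2::'c measure)
      g1 g2 (f1::'c \<Rightarrow> 'c) f2. indirect_CE u P Q1 Q2 I1 I2 g1 g2 f1 f2
      \<and> fully_symmetric Q1 Q2 I1 I2 g1 g2 f1 f2 \<and> knows_state P Q1 I1 g1 \<and> knows_state P Q2 I2 g2
      \<and> (AE w in P. cond_dist Q1 g1 f1 w = x \<and> cond_dist Q2 g2 f2 w = x)"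
    using indirect_CE_lottery[OF x] unfolding fully_symmetric_def by blast
qed

end
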